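(* Let $1 \leq n < \omega$, let $H$ be a set of ordinals, and let $\langle u_b \mid b \in [H]^n \rangle$ be a uniform $n$-dimensional $\Delta$-system, witnessed by an ordinal $\rho$ and sets $\langle \mathbf{r}_{\mathbf{m}} \mid \mathbf{m} \subseteq n \rangle$. Then: (1) for all $\mathbf{m} \subseteq n$ and all $a, b \in [H]^n$, if $a[\mathbf{m}] = b[\mathbf{m}]$, then $u_a[\mathbf{r}_{\mathbf{m}}] = u_b[\mathbf{r}_{\mathbf{m}}]$; (2) $\langle u_b \mid b \in [H]^n \rangle$ is an $n$-dimensional $\Delta$-system.
   Context: Natural numbers are von Neumann ordinals, so $n = \{0, \dots, n-1\}$. $[H]^k$ denotes the set of $k$-element subsets of $H$. For a set $u$ of ordinals, $\mathrm{otp}(u)$ is its order type; for $i < \mathrm{otp}(u)$, $u(i)$ is the unique $\alpha \in u$ with $\mathrm{otp}(u \cap \alpha) = i$; for $\mathbf{i} \subseteq \mathrm{otp}(u)$, $u[\mathbf{i}] := \{u(i) \mid i \in \mathbf{i}\}$. Sets of ordinals $a, b$ are aligned if $\mathrm{otp}(a) = \mathrm{otp}(b)$ and for every $\gamma \in a \cap b$, $\mathrm{otp}(a \cap \gamma) = \mathrm{otp}(b \cap \gamma)$. Let $\mathbf{r}(a,b) := \{ i < \mathrm{otp}(a) \mid a(i) \in b\}$. A family $\langle u_b \mid b \in [H]^n \rangle$ of sets of ordinals is a uniform $n$-dimensional $\Delta$-system, witnessed by an ordinal $\rho$ and sets $\mathbf{r}_{\mathbf{m}} \subseteq \rho$ ($\mathbf{m}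 \subseteq n$), if: (i) $\mathrm{otp}(u_b) = \rho$ for all $b \in [H]^n$; (ii) for all $a, b \in [H]^n$ and $\mathbf{m} \subseteq n$, if $a$ and $b$ are aligned with $\mathbf{r}(a,b) = \mathbf{m}$, then $u_a$ and $u_b$ are aligned with $\mathbf{r}(u_a, u_b) = \mathbf{r}_{\mathbf{m}}$; (iii) $\mathbf{r}_{\mathbf{m}_0 \cap \mathbf{m}_1} = \mathbf{r}_{\mathbf{m}_0} \cap \mathbf{r}_{\mathbf{m}_1}$ for all $\mathbf{m}_0, \mathbf{m}_1 \subseteq n$. A family of sets $\langle u_b \mid b \in [H]^n \rangle$ is an $n$-dimensional $\Delta$-system if there is a family of roots $\langle R^{\mathbf{m}}_a \mid \mathbf{m} \subseteq n,\ a \in [H]^{|\mathbf{m}|} \rangle$ such that for all $b, b' \in [H]^n$, if $b$ and $b'$ are aligned and $\mathbf{r}(b,b') = \mathbf{m}$, then $u_b \cap u_{b'} = R^{\mathbf{m}}_{b \cap b'}$. *)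

theory Defs
  imports Main
begin

text \<open>Ordinals are modelled by elements of a type of class wellorder; an ordinal
  index i (of some wellorder type) stands for the ordinal order type of {..<i}.
  Natural numbers are used for the finite ordinals n = {..<n}.\<close>

definition otp_eq :: "'a::linorder set \<Rightarrow> 'b::linorder set \<Rightarrow> bool" where
  "otp_eq A B \<longleftrightarrow> (\<exists>f. bij_betw f A B \<and> (\<forall>x\<in>A. \<forall>y\<in>A. x < y \<longrightarrow> f x < f y))"

definition elem :: "'c::wellorder set \<Rightarrow> 'o::wellorder \<Rightarrow> 'c" where
  "elem u i = (THE x. x \<in> u \<and> otp_eq (u \<inter> {..<x}) {..<i})"

definition aligned :: "'c::wellorder set \<Rightarrow> 'c set \<Rightarrow> bool" where
  "aligned a b \<longleftrightarrow> otp_eq a b \<and>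
     (\<forall>g \<in> a \<inter> b. otp_eq (a \<inter> {..<g}) (b \<inter> {..<g}))"

text \<open>r(a,b) = {i < otp(a) | a(i) \<in> b}, where ot is the order type of a.\<close>
definition rr :: "'o::wellorder \<Rightarrow> 'c::wellorder set \<Rightarrow> 'c set \<Rightarrow> 'o set" where
  "rr ot a b = {i. i < ot \<and> elem a i \<in> b}"

definition ksubsets :: "'a set \<Rightarrow> nat \<Rightarrow> 'a set set" where
  "ksubsets H k = {b. b \<subseteq> H \<and> finite b \<and> card b = k}"

definition uniform_delta_system ::
  "'a::wellorder set \<Rightarrow> nat \<Rightarrow> ('a set \<Rightarrow> 'c::wellorder set) \<Rightarrow> 'o::wellorder
     \<Rightarrow> (nat set \<Rightarrow> 'o set) \<Rightarrow> bool" where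
  "uniform_delta_system H n u rho R \<longleftrightarrow>
     (\<forall>m. m \<subseteq> {..<n} \<longrightarrow> R m \<subseteq> {..<rho}) \<and>
     (\<forall>b \<in> ksubsets H n. otp_eq (u b) {..<rho}) \<and>
     (\<forall>a \<in> ksubsets H n. \<forall>b \<in> ksubsets H n. \<forall>m. m \<subseteq> {..<n} \<longrightarrow>
        aligned a b \<longrightarrow> rr n a b = m \<longrightarrow>
        aligned (u a) (u b) \<and> rr rho (u a) (u b) = R m) \<and>
     (\<forall>m0 m1. m0 \<subseteq> {..<n} \<longrightarrow> m1 \<subseteq> {..<n} \<longrightarrow> R (m0 \<inter> m1) = R m0 \<inter> R m1)"

definition delta_system ::
  "'a::wellorder set \<Rightarrow> nat \<Rightarrow> ('a set \<Rightarrow> 'c set) \<Rightarrow> bool" where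
  "delta_system H n u \<longleftrightarrow>
     (\<exists>Root :: nat set \<Rightarrow> 'a set \<Rightarrow> 'c set.
        \<forall>b \<in> ksubsets H n. \<forall>b' \<in> ksubsets H n. \<forall>m. m \<subseteq> {..<n} \<longrightarrow>
          aligned b b' \<longrightarrow> rr n b b' = m \<longrightarrow> u b \<inter> u b' = Root m (b \<inter> b'))"

end

(*
  Suppose a and b agree on the positions m. Transform a into b one position at a time, from the
  top down: if a and b already agree above position j and, say, a(j) < b(j), then replacing a(j)
  by b(j) gives an increasing sequence c that is aligned with a and shares with it every position
  except j. By (ii), u_a and u_c agree on the positions r_(r(a,c)), and by (iii) the map m |-> r_m
  is monotone, so they agree on r_m. For (2), take as root R^m_x the set u_b[r_m]
  for any b with b[m] = x; by (1) it does not depend on the choice of b, and by (ii) it equals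
  u_b \<inter> u_b' whenever b, b' are aligned with r(b,b') = m.
*)
theory Submission
  imports Defs
begin

lemma otp_eq_iff: "otp_eq A B \<longleftrightarrow> (\<exists>f. bij_betw f A B \<and> strict_mono_on A f)"
  unfolding otp_eq_def monotone_on_def by blast

lemma otp_eq_sym:
  fixes A :: "'a::linorder set" and B :: "'b::linorder set"
  assumes "otp_eq A B"
  shows "otp_eq B A"
proof -
  obtain f where f: "bij_betw f A B" "strict_mono_on A f"
    using assms unfolding otp_eq_iff by blast
  have "strict_mono_on B (inv_into A f)"
  proof (rule strict_mono_onI)
    fix x y assume "x \<in> B" "y \<in> B" "x < y"
    then show "inv_into A f x < inv_into A f y"
      using f strict_mono_on_less[OF f(2)] bij_betw_inv_into_right[OF f(1)]
        bij_betwE[OF bij_betw_inv_into[OF f(1)]] by metis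
  qed
  then show ?thesis
    using bij_betw_inv_into[OF f(1)] unfolding otp_eq_iff by blast
qed

lemma otp_eq_trans:
  fixes A :: "'a::linorder set" and B :: "'b::linorder set" and C :: "'d::linorder set"
  assumes "otp_eq A B" "otp_eq B C"
  shows "otp_eq A C"
proof -
  obtain f g where f: "bij_betw f A B" "strict_mono_on A f" and g: "bij_betw g B C" "strict_mono_on B g"
    using assms unfolding otp_eq_iff by blast
  have "strict_mono_on A (g \<circ> f)"
    using f g by (intro strict_mono_onI) (auto simp: bij_betw_def dest: strict_mono_onD)
  then show ?thesis
    using bij_betw_trans[OF f(1) g(1)] unfolding otp_eq_iff by blast
qed

lemma otp_eq_image:
  fixes g :: "'a::linorder \<Rightarrow> 'b::linorder"
  assumes "strict_mono_on A g"
  shows "otp_eq A (g ` A)"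
  using assms inj_on_imp_bij_betw strict_mono_on_imp_inj_on unfolding otp_eq_iff by blast

lemma strict_mono_on_into_self_ge:
  fixes f :: "'a::wellorder \<Rightarrow> 'a"
  assumes "strict_mono_on A f" "f ` A \<subseteq> A" "x \<in> A"
  shows "x \<le> f x"
  using assms(3)
proof (induction x rule: less_induct)
  case (less x)
  show ?case
  proof (rule ccontr)
    assume "\<not> x \<le> f x"
    then have "f x < x" by simp
    moreover have "f x \<in> A"
      using assms(2) less.prems by blast
    ultimately have "f (f x) < f x"
      using strict_mono_onD[OF assms(1)] less.prems by blast
    moreover have "f x \<le> f (f x)"
      using less.IH[OF \<open>f x < x\<close> \<open>f x \<in> A\<close>] .
    ultimately show False by simp
  qed
qed

lemma otp_eq_initial_segments_imp_eq:
  fixes S :: "'a::wellorder set"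
  assumes "x \<in> S" "y \<in> S" "otp_eq (S \<inter> {..<x}) (S \<inter> {..<y})"
  shows "x = y"
proof -
  have no_shorter: False
    if eq: "otp_eq (S \<inter> {..<x}) (S \<inter> {..<y})" and "y < x" "y \<in> S" for x y
  proof -
    obtain f where f: "bij_betw f (S \<inter> {..<x}) (S \<inter> {..<y})" "strict_mono_on (S \<inter> {..<x}) f"
      using eq unfolding otp_eq_iff by blast
    have image: "f ` (S \<inter> {..<x}) = S \<inter> {..<y}"
      using f(1) by (simp add: bij_betw_def)
    have y: "y \<in> S \<inter> {..<x}"
      using that(2,3) by simp
    have "f ` (S \<inter> {..<x}) \<subseteq> S \<inter> {..<x}"
      using image that(2) by auto
    then have "y \<le> f y"
      using strict_mono_on_into_self_ge[OF f(2) _ y] by simp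
    moreover have "f y < y"
      using image y by blast
    ultimately show False by simp
  qed
  show ?thesis
  proof (cases x y rule: linorder_cases)
    case less
    then show ?thesis using no_shorter[OF otp_eq_sym[OF assms(3)]] assms(1) by blast
  next
    case greater
    then show ?thesis using no_shorter[OF assms(3)] assms(2) by blast
  qed
qed

lemma elem_eqI:
  fixes A :: "'a::wellorder set" and i :: "'o::wellorder"
  assumes "x \<in> A" "otp_eq (A \<inter> {..<x}) {..<i}"
  shows "elem A i = x"
  unfolding elem_def
proof (rule the_equality)
  show "x \<in> A \<and> otp_eq (A \<inter> {..<x}) {..<i}"
    using assms by blast
next
  fix y assume y: "y \<in> A \<and> otp_eq (A \<inter> {..<y}) {..<i}"
  then have "otp_eq (A \<inter> {..<y}) (A \<inter> {..<x})"
    using otp_eq_trans otp_eq_sym[OF assms(2)] by blast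
  then show "y = x"
    using otp_eq_initial_segments_imp_eq y assms(1) by blast
qed

lemma strict_mono_on_image_Int_lessThan:
  fixes g :: "'a::linorder \<Rightarrow> 'b::linorder"
  assumes "strict_mono_on A g" "x \<in> A"
  shows "g ` A \<inter> {..<g x} = g ` (A \<inter> {..<x})"
  using strict_mono_on_less[OF assms(1) _ assms(2)] by auto

lemma otp_eq_image_below:
  fixes g :: "'o::wellorder \<Rightarrow> 'a::linorder"
  assumes "strict_mono_on {..<r} g" "i < r"
  shows "otp_eq (g ` {..<r} \<inter> {..<g i}) {..<i}"
proof -
  have "g ` {..<r} \<inter> {..<g i} = g ` {..<i}"
    using strict_mono_on_image_Int_lessThan[OF assms(1)] assms(2) by (simp add: Int_absorb1)
  moreover have "{..<i} \<subseteq> {..<r}"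
    using assms(2) by auto
  then have "otp_eq {..<i} (g ` {..<i})"
    using otp_eq_image monotone_on_subset[OF assms(1)] by blast
  ultimately show ?thesis
    using otp_eq_sym by simp
qed

lemma elem_image_lessThan:
  fixes g :: "'o::wellorder \<Rightarrow> 'a::wellorder"
  assumes "strict_mono_on {..<r} g" "i < r"
  shows "elem (g ` {..<r}) i = g i"
  using assms(2) by (intro elem_eqI[OF _ otp_eq_image_below[OF assms]]) auto

lemma elem_enumerates:
  fixes A :: "'a::wellorder set" and r :: "'o::wellorder"
  assumes "otp_eq A {..<r}"
  shows "strict_mono_on {..<r} (elem A)" "elem A ` {..<r} = A"
proof -
  obtain g where g: "bij_betw g {..<r} A" "strict_mono_on {..<r} g"
    using otp_eq_sym[OF assms] unfolding otp_eq_iff by blast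
  have A: "A = g ` {..<r}"
    using g(1) by (simp add: bij_betw_def)
  have "elem A i = g i" if "i < r" for i
    using elem_image_lessThan[OF g(2) that] A by simp
  then show "strict_mono_on {..<r} (elem A)" "elem A ` {..<r} = A"
    using g(2) A by (auto simp: monotone_on_def)
qed

lemma otp_eq_below_elem:
  fixes A :: "'a::wellorder set" and r :: "'o::wellorder"
  assumes "otp_eq A {..<r}" "i < r"
  shows "otp_eq (A \<inter> {..<elem A i}) {..<i}"
  using otp_eq_image_below[OF elem_enumerates(1)[OF assms(1)] assms(2)]
  by (simp add: elem_enumerates(2)[OF assms(1)])

lemma aligned_elem_eq:
  fixes A C :: "'a::wellorder set" and r :: "'o::wellorder"
  assumes "aligned A C" "otp_eq A {..<r}" "i < r" "elem A i \<in> C"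
  shows "elem C i = elem A i"
proof (rule elem_eqI)
  have "elem A i \<in> A"
    using elem_enumerates(2)[OF assms(2)] assms(3) by blast
  then have "otp_eq (C \<inter> {..<elem A i}) (A \<inter> {..<elem A i})"
    using assms(1,4) otp_eq_sym unfolding aligned_def by blast
  then show "otp_eq (C \<inter> {..<elem A i}) {..<i}"
    using otp_eq_trans otp_eq_below_elem[OF assms(2,3)] by blast
qed (fact assms(4))

lemma alignedI_common_positions:
  fixes A C :: "'a::wellorder set" and r :: "'o::wellorder"
  assumes "otp_eq A {..<r}" "otp_eq C {..<r}"
    and "\<And>x. x \<in> A \<inter> C \<Longrightarrow> \<exists>i<r. elem A i = x \<and> elem C i = x"
  shows "aligned A C"
  unfolding aligned_def
proof
  show "otp_eq A C"
    using otp_eq_trans[OF assms(1) otp_eq_sym[OF assms(2)]] .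
  show "\<forall>x\<in>A \<inter> C. otp_eq (A \<inter> {..<x}) (C \<inter> {..<x})"
  proof
    fix x assume "x \<in> A \<inter> C"
    then obtain i where i: "i < r" and x: "elem A i = x" "elem C i = x"
      using assms(3) by blast
    show "otp_eq (A \<inter> {..<x}) (C \<inter> {..<x})"
      using otp_eq_trans[OF otp_eq_below_elem[OF assms(1) i] otp_eq_sym[OF otp_eq_below_elem[OF assms(2) i]]]
      unfolding x .
  qed
qed

lemma Int_eq_elem_image_rr:
  fixes A B :: "'a::wellorder set" and r :: "'o::wellorder"
  assumes "otp_eq A {..<r}"
  shows "A \<inter> B = elem A ` rr r A B"
  using elem_enumerates(2)[OF assms] unfolding rr_def by auto

lemma strict_mono_on_image_eq_imp_eq:
  fixes f g :: "'o::linorder \<Rightarrow> 'a::wellorder"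
  assumes "strict_mono_on M f" "strict_mono_on M g" "f ` M = g ` M" "i \<in> M"
  shows "f i = g i"
proof (rule otp_eq_initial_segments_imp_eq)
  have "otp_eq (h ` M \<inter> {..<h i}) (M \<inter> {..<i})" if "strict_mono_on M h" for h :: "'o \<Rightarrow> 'a"
    using strict_mono_on_image_Int_lessThan[OF that assms(4)]
      otp_eq_image[OF monotone_on_subset[OF that]] otp_eq_sym
    by (metis inf_le1)
  from this[OF assms(1)] this[OF assms(2)]
  show "otp_eq (f ` M \<inter> {..<f i}) (f ` M \<inter> {..<g i})"
    using otp_eq_trans otp_eq_sym assms(3) by metis
qed (use assms in auto)

lemma finite_otp_eq_card:
  fixes A :: "'a::linorder set"
  assumes "finite A"
  shows "otp_eq A {..<card A}"
proof -
  define xs where "xs = sorted_list_of_set A"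
  have "strict_mono_on {..<card A} (nth xs)"
    by (rule strict_mono_onI)
      (auto simp: xs_def intro: sorted_wrt_nth_less[OF strict_sorted_list_of_set])
  moreover have "nth xs ` {..<card A} = A"
  proof -
    have "set xs = A" "length xs = card A"
      using assms by (simp_all add: xs_def)
    then show ?thesis
      by (auto simp: in_set_conv_nth image_iff)
  qed
  ultimately show ?thesis
    using otp_eq_image otp_eq_sym by metis
qed

lemma ksubsets_otp_eq:
  fixes a :: "'a::wellorder set"
  assumes "a \<in> ksubsets H n"
  shows "otp_eq a {..<n}"
  using assms finite_otp_eq_card unfolding ksubsets_def by blast

lemma strict_mono_on_raise_entry:
  fixes f g :: "nat \<Rightarrow> 'a::linorder"
  assumes f: "strict_mono_on {..<n} f" and g: "strict_mono_on {..<n} g" and j: "j < n"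
    and less: "f j < g j" and above: "\<And>i. j < i \<Longrightarrow> i < n \<Longrightarrow> f i = g i"
  shows "strict_mono_on {..<n} (f(j := g j))" and "g j \<notin> f ` {..<n}"
proof -
  show "strict_mono_on {..<n} (f(j := g j))"
  proof (rule strict_mono_onI)
    fix i k assume ik: "i \<in> {..<n}" "k \<in> {..<n}" "i < k"
    consider "i = j" | "k = j" | "i \<noteq> j" "k \<noteq> j"
      by blast
    then show "(f(j := g j)) i < (f(j := g j)) k"
    proof cases
      case 1
      then show ?thesis
        using ik above[of k] strict_mono_onD[OF g] j by simp
    next
      case 2
      then show ?thesis
        using ik less strict_mono_onD[OF f] j by fastforce
    next
      case 3
      then show ?thesis
        using ik strict_mono_onD[OF f] by simp
    qed
  qed
  show "g j \<notin> f ` {..<n}"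
  proof
    assume "g j \<in> f ` {..<n}"
    then obtain k where k: "k < n" "f k = g j"
      by auto
    show False
    proof (cases "k \<le> j")
      case True
      then show False
        using strict_mono_on_leD[OF f] k j less by fastforce
    next
      case False
      then show False
        using above[of k] strict_mono_onD[OF g] k j by fastforce
    qed
  qed
qed

lemma ksubsets_replace_entry:
  fixes a b :: "'a::wellorder set"
  assumes a: "a \<in> ksubsets H n" and b: "b \<in> ksubsets H n" and j: "j < n"
    and less: "elem a j < elem b j" and above: "\<And>i. j < i \<Longrightarrow> i < n \<Longrightarrow> elem a i = elem b i"
  obtains c where "c \<in> ksubsets H n" "aligned a c" "{..<n} - {j} \<subseteq> rr n a c"
    "\<And>i. i < n \<Longrightarrow> elem c i = (if i = j then elem b j else elem a i)"
proof -
  have mono_a: "strict_mono_on {..<n} (elem a)" and enum_a: "elem a ` {..<n} = a"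
    using elem_enumerates[OF ksubsets_otp_eq[OF a]] by blast+
  have mono_b: "strict_mono_on {..<n} (elem b)" and enum_b: "elem b ` {..<n} = b"
    using elem_enumerates[OF ksubsets_otp_eq[OF b]] by blast+
  define g where "g = (elem a)(j := elem b j)"
  have mono_g: "strict_mono_on {..<n} g" and new: "elem b j \<notin> a"
    using strict_mono_on_raise_entry[OF mono_a mono_b j less above] enum_a by (simp_all add: g_def)
  define c where "c = g ` {..<n}"
  have elem_c: "elem c i = g i" if "i < n" for i
    using elem_image_lessThan[OF mono_g that] by (simp add: c_def)
  have "c \<subseteq> H"
    using a b enum_a enum_b j unfolding c_def g_def ksubsets_def by auto
  moreover have "card c = n"
    using strict_mono_on_imp_inj_on[OF mono_g] by (simp add: c_def card_image)
  ultimately have c: "c \<in> ksubsets H n"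
    unfolding ksubsets_def c_def by auto
  have common: "\<exists>i<n. elem a i = x \<and> elem c i = x" if "x \<in> a \<inter> c" for x
    using that new elem_c unfolding c_def g_def by (auto split: if_splits)
  have "aligned a c"
    by (rule alignedI_common_positions[OF ksubsets_otp_eq[OF a] ksubsets_otp_eq[OF c] common])
  moreover have "{..<n} - {j} \<subseteq> rr n a c"
    unfolding rr_def c_def g_def by force
  ultimately show thesis
    using that c elem_c by (simp add: g_def)
qed

lemma rr_subset: "rr r a b \<subseteq> {..<r}"
  by (auto simp: rr_def)

lemma uniform_delta_systemD:
  assumes "uniform_delta_system H n u rho R"
  shows uniform_delta_system_otp_eq: "b \<in> ksubsets H n \<Longrightarrow> otp_eq (u b) {..<rho}"
    and uniform_delta_system_aligned:
      "a \<in> ksubsets H n \<Longrightarrow> b \<in> ksubsets H n \<Longrightarrow> aligned a b \<Longrightarrow> aligned (u a) (u b)"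
    and uniform_delta_system_rr:
      "a \<in> ksubsets H n \<Longrightarrow> b \<in> ksubsets H n \<Longrightarrow> aligned a b \<Longrightarrow>
        rr rho (u a) (u b) = R (rr n a b)"
    and uniform_delta_system_Int:
      "m0 \<subseteq> {..<n} \<Longrightarrow> m1 \<subseteq> {..<n} \<Longrightarrow> R (m0 \<inter> m1) = R m0 \<inter> R m1"
proof -
  have otp: "\<forall>b \<in> ksubsets H n. otp_eq (u b) {..<rho}"
    and mor: "\<forall>a \<in> ksubsets H n. \<forall>b \<in> ksubsets H n. \<forall>m. m \<subseteq> {..<n} \<longrightarrow>
        aligned a b \<longrightarrow> rr n a b = m \<longrightarrow> aligned (u a) (u b) \<and> rr rho (u a) (u b) = R m"
    and Int: "\<forall>m0 m1. m0 \<subseteq> {..<n} \<longrightarrow> m1 \<subseteq> {..<n} \<longrightarrow> R (m0 \<inter> m1) = R m0 \<inter> R m1"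
    using assms unfolding uniform_delta_system_def by simp_all
  show "b \<in> ksubsets H n \<Longrightarrow> otp_eq (u b) {..<rho}"
    using otp by blast
  show "aligned (u a) (u b)" "rr rho (u a) (u b) = R (rr n a b)"
    if "a \<in> ksubsets H n" "b \<in> ksubsets H n" "aligned a b"
    using mor[rule_format, OF that(1,2) rr_subset that(3) refl] by simp_all
  show "m0 \<subseteq> {..<n} \<Longrightarrow> m1 \<subseteq> {..<n} \<Longrightarrow> R (m0 \<inter> m1) = R m0 \<inter> R m1"
    using Int by blast
qed

lemma uniform_delta_system_elem_eq:
  assumes U: "uniform_delta_system H n u rho R"
    and a: "a \<in> ksubsets H n" and c: "c \<in> ksubsets H n" and ac: "aligned a c"
    and m: "m \<subseteq> rr n a c" and i: "i \<in> R m"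
  shows "elem (u a) i = elem (u c) i"
proof -
  have "R m = R (m \<inter> rr n a c)"
    using m by (simp add: Int_absorb2)
  also have "\<dots> = R m \<inter> R (rr n a c)"
    using uniform_delta_system_Int[OF U _ rr_subset] m rr_subset[of n a c] by blast
  finally have "i \<in> rr rho (u a) (u c)"
    using i uniform_delta_system_rr[OF U a c ac] by blast
  then have "i < rho" "elem (u a) i \<in> u c"
    by (auto simp: rr_def)
  then show ?thesis
    using aligned_elem_eq[OF uniform_delta_system_aligned[OF U a c ac] uniform_delta_system_otp_eq[OF U a]]
    by simp
qed

lemma uniform_delta_system_replace_entry:
  assumes U: "uniform_delta_system H n u rho R" and m: "m \<subseteq> {..<n}"
    and x: "x \<in> ksubsets H n" and y: "y \<in> ksubsets H n"
    and xy: "\<forall>i\<in>m \<union> {Suc j..<n}. elem x i = elem y i"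
    and j: "j < n" and less: "elem x j < elem y j"
  obtains c where "c \<in> ksubsets H n" "\<forall>i\<in>R m. elem (u x) i = elem (u c) i"
    "\<forall>i\<in>m \<union> {j..<n}. elem c i = elem y i"
proof -
  obtain c where c: "c \<in> ksubsets H n" "aligned x c" "{..<n} - {j} \<subseteq> rr n x c"
    and elem_c: "\<And>i. i < n \<Longrightarrow> elem c i = (if i = j then elem y j else elem x i)"
    using ksubsets_replace_entry[OF x y j less] xy by auto
  have "m \<subseteq> {..<n} - {j}"
    using m xy less by auto
  then have "\<forall>i\<in>R m. elem (u x) i = elem (u c) i"
    using uniform_delta_system_elem_eq[OF U x c(1,2)] c(3) by blast
  moreover have "\<forall>i\<in>m \<union> {j..<n}. elem c i = elem y i"
    using elem_c xy m j by auto
  ultimately show thesis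
    using that c(1) by blast
qed

lemma uniform_delta_system_agree_above:
  assumes U: "uniform_delta_system H n u rho R" and m: "m \<subseteq> {..<n}"
    and "a \<in> ksubsets H n" "b \<in> ksubsets H n" "\<forall>i\<in>m \<union> {j..<n}. elem a i = elem b i"
  shows "\<forall>i\<in>R m. elem (u a) i = elem (u b) i"
  using assms(3-)
proof (induction j arbitrary: a b)
  case 0
  then have "elem a ` {..<n} = elem b ` {..<n}"
    by (intro image_cong) auto
  then have "a = b"
    using elem_enumerates(2)[OF ksubsets_otp_eq[OF 0(1)]] elem_enumerates(2)[OF ksubsets_otp_eq[OF 0(2)]]
    by simp
  then show ?case by simp
next
  case (Suc j)
  consider "n \<le> j \<or> elem a j = elem b j" | "j < n" "elem a j < elem b j" | "j < n" "elem b j < elem a j"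
    by fastforce
  then show ?case
  proof cases
    case 1
    have "\<forall>i\<in>m \<union> {j..<n}. elem a i = elem b i"
    proof
      fix i assume "i \<in> m \<union> {j..<n}"
      then have "i \<in> m \<union> {Suc j..<n} \<or> i = j \<and> j < n"
        by auto
      then show "elem a i = elem b i"
        using 1 Suc.prems(3) by auto
    qed
    then show ?thesis
      using Suc.IH[OF Suc.prems(1,2)] by blast
  next
    case 2
    obtain c where "c \<in> ksubsets H n" "\<forall>i\<in>R m. elem (u a) i = elem (u c) i"
      "\<forall>i\<in>m \<union> {j..<n}. elem c i = elem b i"
      using uniform_delta_system_replace_entry[OF U m Suc.prems 2] .
    then show ?thesis
      using Suc.IH[of c b] Suc.prems(2) by simp
  next
    case 3
    have "\<forall>i\<in>m \<union> {Suc j..<n}. elem b i = elem a i"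
      using Suc.prems(3) by simp
    then obtain c where "c \<in> ksubsets H n" "\<forall>i\<in>R m. elem (u b) i = elem (u c) i"
      "\<forall>i\<in>m \<union> {j..<n}. elem c i = elem a i"
      using uniform_delta_system_replace_entry[OF U m Suc.prems(2,1) _ 3] by blast
    then show ?thesis
      using Suc.IH[of c a] Suc.prems(1) by simp
  qed
qed

lemma uniform_delta_system_image_eq:
  assumes U: "uniform_delta_system H n u rho R" and m: "m \<subseteq> {..<n}"
    and a: "a \<in> ksubsets H n" and b: "b \<in> ksubsets H n" and eq: "elem a ` m = elem b ` m"
  shows "elem (u a) ` R m = elem (u b) ` R m"
proof -
  have "strict_mono_on m (elem a)" "strict_mono_on m (elem b)"
    using monotone_on_subset[OF elem_enumerates(1)[OF ksubsets_otp_eq[OF a]] m]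
      monotone_on_subset[OF elem_enumerates(1)[OF ksubsets_otp_eq[OF b]] m] .
  then have "\<forall>i\<in>m. elem a i = elem b i"
    using strict_mono_on_image_eq_imp_eq[OF _ _ eq] by blast
  then show ?thesis
    using uniform_delta_system_agree_above[OF U m a b, of n] by (auto intro: image_cong)
qed

lemma uniform_delta_system_imp_delta_system:
  fixes H :: "'a::wellorder set" and u :: "'a set \<Rightarrow> 'c::wellorder set"
    and rho :: "'o::wellorder" and R :: "nat set \<Rightarrow> 'o set"
  assumes U: "uniform_delta_system H n u rho R"
  shows "delta_system H n u"
proof -
  define Root :: "nat set \<Rightarrow> 'a set \<Rightarrow> 'c set" where
    "Root m x = elem (u (SOME b. b \<in> ksubsets H n \<and> elem b ` m = x)) ` R m" for m x
  have "u b \<inter> u b' = Root m (b \<inter> b')"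
    if b: "b \<in> ksubsets H n" and b': "b' \<in> ksubsets H n" and m: "m \<subseteq> {..<n}"
      and bb': "aligned b b'" and rr: "rr n b b' = m" for b b' m
  proof -
    have Int_b: "b \<inter> b' = elem b ` m"
      using Int_eq_elem_image_rr[OF ksubsets_otp_eq[OF b]] rr by simp
    define b0 where "b0 = (SOME b0. b0 \<in> ksubsets H n \<and> elem b0 ` m = b \<inter> b')"
    have "b0 \<in> ksubsets H n \<and> elem b0 ` m = elem b ` m"
      unfolding b0_def Int_b by (rule someI[where x = b]) (simp add: b)
    then have "Root m (b \<inter> b') = elem (u b) ` R m"
      using uniform_delta_system_image_eq[OF U m _ b] by (simp add: Root_def b0_def[symmetric])
    also have "\<dots> = u b \<inter> u b'"
      using Int_eq_elem_image_rr[OF uniform_delta_system_otp_eq[OF U b], of "u b'"]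
        uniform_delta_system_rr[OF U b b' bb'] rr by simp
    finally show ?thesis ..
  qed
  then show ?thesis
    unfolding delta_system_def by (intro exI[of _ Root]) blast
qed

theorem proposition2p6:
  fixes H :: "'a::wellorder set" and n :: nat
    and u :: "'a set \<Rightarrow> 'c::wellorder set"
    and rho :: "'o::wellorder" and R :: "nat set \<Rightarrow> 'o set"
  assumes "1 \<le> n"
    and "uniform_delta_system H n u rho R"
  shows "(\<forall>m. m \<subseteq> {..<n} \<longrightarrow> (\<forall>a \<in> ksubsets H n. \<forall>b \<in> ksubsets H n.
            elem a ` m = elem b ` m \<longrightarrow> elem (u a) ` R m = elem (u b) ` R m))
         \<and> delta_system H n u"
  using uniform_delta_system_image_eq[OF assms(2)] uniform_delta_system_imp_delta_system[OF assms(2)]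
  by (intro conjI allI impI ballI)

end
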